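(* Assume the capacities satisfy (C1)–(C3), and let $G_N$ (Poissonian random graph), $G_N'$, $H_N$, $H_N'$, $\mathcal A_N$ and $c_N=N^\xi$ be as described below. Then for $N$ sufficiently large, every $t\in\mathbb N$ and every $b\in(0,1)$, $$\mathbb P(H_N\ne H_N')\le \mathbb P(\mathcal A_N^c)+\mathbb P(H_N>2t)+2t\,\mathbb P(|\mathcal N_{t-1}|>N^b)+O(tN^{-1+b}c_N^4).$$
   Context: Capacities $\lambda_1,\dots,\lambda_N>0$ deterministic; $l_N=\sum_i\lambda_i$, $\mu_N=\frac1N\sum_i\lambda_i$, $\nu_N=\sum_i\lambda_i^2/\sum_i\lambda_i$, $f^{(N)}_n=\frac1N\sum_i e^{-\lambda_i}\frac{\lambda_i^n}{n!}$, $g^{(N)}_n=\frac{1}{N\mu_N}\sum_i e^{-\lambda_i}\frac{\lambda_i^{n+1}}{n!}$; $d_{TV}(p,q)=\frac12\sum_j|p_j-q_j|$. (C1): there are $\mu\in(0,\infty)$, $\nu\in(1,\infty)$, $\alpha_1>0$ with $|\mu_N-\mu|,|\nu_N-\nu|=O(N^{-\alpha_1})$. (C2): there are $N$-independent sequences $f,g$ and $\alpha_2>0$ with $d_{TV}(f^{(N)},f),d_{TV}(g^{(N)},g)=O(N^{-\alpha_2})$. (C3): there is $\tau>3$ such that for every $\varepsilon>0$ (with $\gamma:=\frac1{\tau-1}+\varepsilon<\frac12$), $\limsup_N\frac1N\sum_i\lambda_i^{\tau-1-\varepsilon}<\infty$ and $\max_i\lambda_i\le N^\gamma$. $G_N$: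 Poissonian random graph (independent Poisson$(\lambda_i\lambda_j/l_N)$ numbers of edges between distinct $i,j$; connection probability $p_{ij}=1-e^{-\lambda_i\lambda_j/l_N}$). $G_N'$: independent edge indicators with $p'_{ij}=h(\lambda_i\lambda_j/l_N)$, $h:[0,\infty)\to[0,1]$, $h(x)-x=O(x^2)$ as $x\downarrow0$. Coupling: independently over $i<j$, $(\hat X_{ij},\hat X'_{ij},K_{ij})$ takes values $(1,1,0),(1,0,1),(0,1,1),(0,0,0)$ with probabilities $\min\{p_{ij},p'_{ij}\}$, $p_{ij}-\min\{p_{ij},p'_{ij}\}$, $\max\{p_{ij},p'_{ij}\}-p_{ij}$, $1-\max\{p_{ij},p'_{ij}\}$; $\hat X_{ij},\hat X'_{ij}$ are the connection indicators of $G_N,G_N'$; $K_{ji}=K_{ij}$, $K_i=\sum_{j\ne i}K_{ij}$. For $\xi>0$, $c_N=N^\xi$ and $\mathcal A_N=\{\sum_{i}K_i\mathbf 1\{\lambda_i>c_N\}=0\}$. $H_N$, $H_N'$ are the graph distances ($+\infty$ if disconnected) between the same two distinct uniformly chosen nodes $A_1\ne A_2$ in $G_N$, $G_N'$. For a uniformly chosen node $A$, $\mathcal N_t=\{1\le j\le N: d(A,j)\le t\}$ where $d$ is graph distance in $G_N$. *)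

theory Defs
  imports "HOL-Probability.Probability" "HOL-Library.Landau_Symbols" "HOL-Library.Extended_Nat"
begin

text \<open>Capacities: lam N i is the capacity lambda_i of node i (nodes are 0,...,N-1)
  in the N-th graph.\<close>

definition lN :: "(nat \<Rightarrow> nat \<Rightarrow> real) \<Rightarrow> nat \<Rightarrow> real" where
  "lN lam N = (\<Sum>i<N. lam N i)"

definition muN :: "(nat \<Rightarrow> nat \<Rightarrow> real) \<Rightarrow> nat \<Rightarrow> real" where
  "muN lam N = (1 / real N) * (\<Sum>i<N. lam N i)"

definition nuN :: "(nat \<Rightarrow> nat \<Rightarrow> real) \<Rightarrow> nat \<Rightarrow> real" where
  "nuN lam N = (\<Sum>i<N. (lam N i)^2) / (\<Sum>i<N. lam N i)"

definition fN :: "(nat \<Rightarrow> nat \<Rightarrow> real) \<Rightarrow> nat \<Rightarrow> nat \<Rightarrow> real" where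
  "fN lam N n = (1 / real N) * (\<Sum>i<N. exp (- lam N i) * (lam N i)^n / fact n)"

definition gN :: "(nat \<Rightarrow> nat \<Rightarrow> real) \<Rightarrow> nat \<Rightarrow> nat \<Rightarrow> real" where
  "gN lam N n = (1 / (real N * muN lam N)) * (\<Sum>i<N. exp (- lam N i) * (lam N i)^(n+1) / fact n)"

definition dTV :: "(nat \<Rightarrow> real) \<Rightarrow> (nat \<Rightarrow> real) \<Rightarrow> real" where
  "dTV p q = (1/2) * (\<Sum>j. \<bar>p j - q j\<bar>)"

text \<open>Unordered pairs of distinct nodes, represented as (i,j) with i<j<N.\<close>
definition pairsN :: "nat \<Rightarrow> (nat \<times> nat) set" where
  "pairsN N = {(i,j). i < j \<and> j < N}"

definition wN :: "(nat \<Rightarrow> nat \<Rightarrow> real) \<Rightarrow> nat \<Rightarrow> nat \<Rightarrow> nat \<Rightarrow> real" where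
  "wN lam N i j = lam N i * lam N j / lN lam N"

definition pN :: "(nat \<Rightarrow> nat \<Rightarrow> real) \<Rightarrow> nat \<Rightarrow> nat \<Rightarrow> nat \<Rightarrow> real" where
  "pN lam N i j = 1 - exp (- wN lam N i j)"

definition pN' :: "(real \<Rightarrow> real) \<Rightarrow> (nat \<Rightarrow> nat \<Rightarrow> real) \<Rightarrow> nat \<Rightarrow> nat \<Rightarrow> nat \<Rightarrow> real" where
  "pN' h lam N i j = h (wN lam N i j)"

text \<open>Law of the coupled triple (X_ij, X'_ij, K_ij) for a single pair.\<close>
definition coup :: "real \<Rightarrow> real \<Rightarrow> (bool \<times> bool \<times> bool) pmf" where
  "coup p p' = embed_pmf (\<lambda>v.
     if v = (True, True, False) then min p p'
     else if v = (True, False, True) then p - min p p'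
     else if v = (False, True, True) then max p p' - p
     else if v = (False, False, False) then 1 - max p p'
     else 0)"

definition edge_pmf :: "(real \<Rightarrow> real) \<Rightarrow> (nat \<Rightarrow> nat \<Rightarrow> real) \<Rightarrow> nat
     \<Rightarrow> (nat \<times> nat \<Rightarrow> bool \<times> bool \<times> bool) pmf" where
  "edge_pmf h lam N = Pi_pmf (pairsN N) (False, False, False)
     (\<lambda>(i,j). coup (pN lam N i j) (pN' h lam N i j))"

type_synonym config = "nat \<times> nat \<Rightarrow> bool \<times> bool \<times> bool"

definition Xhat :: "config \<Rightarrow> nat \<Rightarrow> nat \<Rightarrow> bool" where
  "Xhat \<omega> i j = (i \<noteq> j \<and> fst (\<omega> (min i j, max i j)))"

definition Xhat' :: "config \<Rightarrow> nat \<Rightarrow> nat \<Rightarrow> bool" where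
  "Xhat' \<omega> i j = (i \<noteq> j \<and> fst (snd (\<omega> (min i j, max i j))))"

definition Kc :: "config \<Rightarrow> nat \<Rightarrow> nat \<Rightarrow> bool" where
  "Kc \<omega> i j = (i \<noteq> j \<and> snd (snd (\<omega> (min i j, max i j))))"

definition Kdeg :: "config \<Rightarrow> nat \<Rightarrow> nat \<Rightarrow> nat" where
  "Kdeg \<omega> N i = (\<Sum>j\<in>{..<N} - {i}. if Kc \<omega> i j then 1 else 0)"

definition edgesG :: "config \<Rightarrow> (nat \<times> nat) set" where
  "edgesG \<omega> = {(i,j). Xhat \<omega> i j}"

definition edgesG' :: "config \<Rightarrow> (nat \<times> nat) set" where
  "edgesG' \<omega> = {(i,j). Xhat' \<omega> i j}"

definition gdist :: "(nat \<times> nat) set \<Rightarrow> nat \<Rightarrow> nat \<Rightarrow> enat" where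
  "gdist E i j = (if \<exists>n. (i,j) \<in> E ^^ n then enat (LEAST n. (i,j) \<in> E ^^ n) else \<infinity>)"

text \<open>The event A_N, with c_N = N powr xi.\<close>
definition eventA :: "(nat \<Rightarrow> nat \<Rightarrow> real) \<Rightarrow> real \<Rightarrow> nat \<Rightarrow> config set" where
  "eventA lam \<xi> N = {\<omega>. (\<Sum>i<N. Kdeg \<omega> N i * (if lam N i > real N powr \<xi> then 1 else 0)) = 0}"

definition node_pair_pmf :: "nat \<Rightarrow> (nat \<times> nat) pmf" where
  "node_pair_pmf N = pmf_of_set {(a1,a2). a1 < N \<and> a2 < N \<and> a1 \<noteq> a2}"

definition prob_H_neq :: "(real \<Rightarrow> real) \<Rightarrow> (nat \<Rightarrow> nat \<Rightarrow> real) \<Rightarrow> nat \<Rightarrow> real" where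
  "prob_H_neq h lam N = measure_pmf.prob (pair_pmf (node_pair_pmf N) (edge_pmf h lam N))
     {((a1,a2),\<omega>). gdist (edgesG \<omega>) a1 a2 \<noteq> gdist (edgesG' \<omega>) a1 a2}"

definition prob_notA :: "(real \<Rightarrow> real) \<Rightarrow> (nat \<Rightarrow> nat \<Rightarrow> real) \<Rightarrow> real \<Rightarrow> nat \<Rightarrow> real" where
  "prob_notA h lam \<xi> N = measure_pmf.prob (edge_pmf h lam N) (- eventA lam \<xi> N)"

definition prob_H_gt :: "(real \<Rightarrow> real) \<Rightarrow> (nat \<Rightarrow> nat \<Rightarrow> real) \<Rightarrow> nat \<Rightarrow> nat \<Rightarrow> real" where
  "prob_H_gt h lam N s = measure_pmf.prob (pair_pmf (node_pair_pmf N) (edge_pmf h lam N))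
     {((a1,a2),\<omega>). gdist (edgesG \<omega>) a1 a2 > enat s}"

definition prob_ball_gt :: "(real \<Rightarrow> real) \<Rightarrow> (nat \<Rightarrow> nat \<Rightarrow> real) \<Rightarrow> nat \<Rightarrow> nat \<Rightarrow> real \<Rightarrow> real" where
  "prob_ball_gt h lam N s b = measure_pmf.prob (pair_pmf (pmf_of_set {..<N}) (edge_pmf h lam N))
     {(a,\<omega>). real (card {j. j < N \<and> gdist (edgesG \<omega>) a j \<le> enat s}) > real N powr b}"

end

theory Submission
  imports Defs
begin

text \<open>Couple \<open>G\<^sub>N\<close> and \<open>G\<^sub>N'\<close> pair by pair, so that they differ exactly on the pairs with
  \<open>K\<^sub>i\<^sub>j = 1\<close>; on \<open>\<A>\<^sub>N\<close> every such discrepancy joins two nodes of capacity at most \<open>c\<^sub>N\<close>.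
  If \<open>H\<^sub>N \<noteq> H\<^sub>N'\<close> and \<open>H\<^sub>N \<le> 2t\<close>, a shortest path of one of the graphs leaves their common
  subgraph, and its first or its last discrepancy lies within distance \<open>t - 1\<close> of \<open>A\<^sub>1\<close> or
  of \<open>A\<^sub>2\<close>. Unless that ball has more than \<open>N\<^sup>b\<close> nodes, this yields a low-capacity pair
  \<open>(i, j)\<close> with \<open>K\<^sub>i\<^sub>j = 1\<close> and \<open>i\<close> in a ball of at most \<open>N\<^sup>b\<close> nodes. As \<open>K\<^sub>i\<^sub>j\<close>
  depends on the pair \<open>(i, j)\<close> only, deleting that pair keeps \<open>i\<close> or \<open>j\<close> in a ball that is
  no larger, and the pair is absent with probability at least \<open>1/2\<close>, this has probability at
  most \<open>2 |p\<^sub>i\<^sub>j - p'\<^sub>i\<^sub>j|\<close> times that of \<open>i\<close> or \<open>j\<close> lying in a small ball. Summing over all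
  pairs gives \<open>O(N\<^sup>1\<^sup>+\<^sup>b max |p\<^sub>i\<^sub>j - p'\<^sub>i\<^sub>j|) = O(N\<^sup>b\<^sup>-\<^sup>1 c\<^sub>N\<^sup>4)\<close>, since
  \<open>w\<^sub>i\<^sub>j \<le> 2 c\<^sub>N\<^sup>2 / (\<mu> N)\<close> and \<open>|p\<^sub>i\<^sub>j - p'\<^sub>i\<^sub>j| = O(w\<^sub>i\<^sub>j\<^sup>2)\<close>.\<close>

section \<open>Shortest paths\<close>

lemma gdist_le_enat_iff: "gdist E a b \<le> enat s \<longleftrightarrow> (\<exists>n\<le>s. (a, b) \<in> E ^^ n)"
proof
  assume le: "gdist E a b \<le> enat s"
  then have ex: "\<exists>n. (a, b) \<in> E ^^ n" unfolding gdist_def by (auto split: if_splits)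
  with le have "(LEAST n. (a, b) \<in> E ^^ n) \<le> s" unfolding gdist_def by auto
  with LeastI_ex[OF ex] show "\<exists>n\<le>s. (a, b) \<in> E ^^ n" by blast
next
  assume "\<exists>n\<le>s. (a, b) \<in> E ^^ n"
  then obtain n where "n \<le> s" "(a, b) \<in> E ^^ n" by blast
  moreover from this have "(LEAST n. (a, b) \<in> E ^^ n) \<le> n" by (intro Least_le)
  ultimately show "gdist E a b \<le> enat s" unfolding gdist_def by auto
qed

lemma gdist_eq_enat_iff:
  "gdist E a b = enat n \<longleftrightarrow> (a, b) \<in> E ^^ n \<and> (\<forall>m<n. (a, b) \<notin> E ^^ m)"
proof
  assume eq: "gdist E a b = enat n"
  then have ex: "\<exists>m. (a, b) \<in> E ^^ m" unfolding gdist_def by (auto split: if_splits)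
  with eq have "n = (LEAST m. (a, b) \<in> E ^^ m)" unfolding gdist_def by auto
  with LeastI_ex[OF ex] not_less_Least show "(a, b) \<in> E ^^ n \<and> (\<forall>m<n. (a, b) \<notin> E ^^ m)"
    by blast
next
  assume "(a, b) \<in> E ^^ n \<and> (\<forall>m<n. (a, b) \<notin> E ^^ m)"
  moreover from this have "(LEAST m. (a, b) \<in> E ^^ m) = n"
    by (intro Least_equality) (auto simp: not_less[symmetric])
  ultimately show "gdist E a b = enat n" unfolding gdist_def by auto
qed

lemma relpow_mono:
  fixes E F :: "'a rel"
  assumes "E \<subseteq> F"
  shows "(a, b) \<in> E ^^ n \<Longrightarrow> (a, b) \<in> F ^^ n"
proof (induction n arbitrary: b)
  case (Suc n)
  then obtain y where "(a, y) \<in> E ^^ n" "(y, b) \<in> E" by (blast elim: relpow_Suc_E)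
  with Suc.IH assms show ?case by (blast intro: relpow_Suc_I)
qed simp

lemma relpow_sym: "sym E \<Longrightarrow> (a, b) \<in> E ^^ n \<Longrightarrow> (b, a) \<in> E ^^ n"
proof (induction n arbitrary: b)
  case (Suc n)
  then show ?case by (meson relpow_Suc_E relpow_Suc_I2 symD)
qed simp

lemma relpow_first_edge_outside:
  "(a, b) \<in> F ^^ n \<Longrightarrow> (a, b) \<in> G ^^ n \<or>
     (\<exists>k u v. k < n \<and> (a, u) \<in> G ^^ k \<and> (u, v) \<in> F - G \<and> (v, b) \<in> F ^^ (n - 1 - k))"
proof (induction n arbitrary: a)
  case (Suc n)
  then obtain y where y: "(a, y) \<in> F" "(y, b) \<in> F ^^ n" by (blast elim: relpow_Suc_E2)
  show ?case
  proof (cases "(a, y) \<in> G")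
    case True
    from Suc.IH[OF y(2)] show ?thesis
    proof (elim disjE exE conjE)
      fix k u v assume "k < n" "(y, u) \<in> G ^^ k" "(u, v) \<in> F - G" "(v, b) \<in> F ^^ (n - 1 - k)"
      moreover from True \<open>(y, u) \<in> G ^^ k\<close> have "(a, u) \<in> G ^^ Suc k" by (rule relpow_Suc_I2)
      ultimately show ?thesis by (intro disjI2 exI[of _ "Suc k"] exI[of _ u] exI[of _ v]) auto
    qed (use True in \<open>blast intro: relpow_Suc_I2\<close>)
  qed (use y in \<open>intro disjI2 exI[of _ 0], auto\<close>)
qed simp

lemma relpow_last_edge_outside:
  "(a, b) \<in> F ^^ n \<Longrightarrow> (a, b) \<in> G ^^ n \<or>
     (\<exists>m u v. m < n \<and> (a, u) \<in> F ^^ (n - 1 - m) \<and> (u, v) \<in> F - G \<and> (v, b) \<in> G ^^ m)"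
proof (induction n arbitrary: b)
  case (Suc n)
  then obtain y where y: "(a, y) \<in> F ^^ n" "(y, b) \<in> F" by (blast elim: relpow_Suc_E)
  show ?case
  proof (cases "(y, b) \<in> G")
    case True
    from Suc.IH[OF y(1)] show ?thesis
    proof (elim disjE exE conjE)
      fix m u v assume "m < n" "(a, u) \<in> F ^^ (n - 1 - m)" "(u, v) \<in> F - G" "(v, y) \<in> G ^^ m"
      with True show ?thesis by (intro disjI2 exI[of _ "Suc m"]) auto
    qed (use True in auto)
  qed (use y in \<open>intro disjI2 exI[of _ 0], auto\<close>)
qed simp

text \<open>Take the first edge outside \<open>G\<close> if it starts within \<open>G\<close>-distance \<open>t - 1\<close> of \<open>a\<close>,
  and otherwise the last one, which then ends within \<open>G\<close>-distance \<open>t - 1\<close> of \<open>b\<close>.\<close>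
lemma relpow_edge_outside_near_ends:
  assumes path: "(a, b) \<in> F ^^ n" and not_G: "(a, b) \<notin> G ^^ n" and "n \<le> 2 * t" and "sym G"
  shows "\<exists>u v. (u, v) \<in> F - G \<and> ((\<exists>k\<le>t - 1. (a, u) \<in> G ^^ k) \<or> (\<exists>k\<le>t - 1. (b, v) \<in> G ^^ k))"
proof -
  obtain k u v where kuv: "k < n" "(a, u) \<in> G ^^ k" "(u, v) \<in> F - G" "(v, b) \<in> F ^^ (n - 1 - k)"
    using relpow_first_edge_outside[OF path, of G] not_G by blast
  show ?thesis
  proof (cases "k \<le> t - 1")
    case False
    then have short: "n - 1 - k \<le> t - 1" using \<open>n \<le> 2 * t\<close> \<open>k < n\<close> by linarith
    from relpow_last_edge_outside[OF kuv(4), of G] show ?thesis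
    proof (elim disjE exE conjE)
      assume "(v, b) \<in> G ^^ (n - 1 - k)"
      then show ?thesis using kuv(3) short relpow_sym[OF \<open>sym G\<close>] by blast
    next
      fix m u' v' assume "m < n - 1 - k" "(u', v') \<in> F - G" "(v', b) \<in> G ^^ m"
      then show ?thesis using short relpow_sym[OF \<open>sym G\<close>] by (meson less_imp_le order_trans)
    qed
  qed (use kuv in blast)
qed

lemma relpow_subset_insert_edge:
  fixes E E0 :: "'a rel"
  assumes "E \<subseteq> E0 \<union> {(i, j), (j, i)}"
  shows "(a, b) \<in> E ^^ n \<Longrightarrow> (a, b) \<in> E0 ^^ n \<or> (\<exists>m<n. (a, i) \<in> E0 ^^ m \<or> (a, j) \<in> E0 ^^ m)"
proof (induction n arbitrary: b)
  case (Suc n)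
  then obtain y where y: "(a, y) \<in> E ^^ n" "(y, b) \<in> E" by (blast elim: relpow_Suc_E)
  from Suc.IH[OF y(1)] show ?case
  proof (elim disjE)
    assume "(a, y) \<in> E0 ^^ n"
    moreover have "(y, b) \<in> E0 \<or> y = i \<or> y = j" using y(2) assms by auto
    ultimately show ?thesis by auto
  qed (use less_SucI in blast)
qed simp

lemma gdist_differ_imp_edge_near_ends:
  assumes "sym E" "sym E'" and le: "gdist E a b \<le> enat (2 * t)" and ne: "gdist E a b \<noteq> gdist E' a b"
  shows "\<exists>u v. (u, v) \<in> (E \<union> E') - (E \<inter> E') \<and>
    ((\<exists>k\<le>t - 1. (a, u) \<in> (E \<inter> E') ^^ k) \<or> (\<exists>k\<le>t - 1. (b, v) \<in> (E \<inter> E') ^^ k))"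
proof -
  let ?G = "E \<inter> E'"
  obtain n where n: "gdist E a b = enat n" using le by (cases "gdist E a b") auto
  then have path: "(a, b) \<in> E ^^ n" and shortest: "\<And>m. m < n \<Longrightarrow> (a, b) \<notin> E ^^ m"
    by (auto simp: gdist_eq_enat_iff)
  have G_E: "(a, b) \<in> ?G ^^ m \<Longrightarrow> (a, b) \<in> E ^^ m" for m by (rule relpow_mono[rotated]) auto
  have G_E': "(a, b) \<in> ?G ^^ m \<Longrightarrow> (a, b) \<in> E' ^^ m" for m by (rule relpow_mono[rotated]) auto
  obtain F m where F: "F = E \<or> F = E'" "(a, b) \<in> F ^^ m" "(a, b) \<notin> ?G ^^ m" "m \<le> 2 * t"
  proof (cases "\<exists>m<n. (a, b) \<in> E' ^^ m")
    case True
    then obtain m where "m < n" "(a, b) \<in> E' ^^ m" by blast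
    with that[of E' m] G_E shortest n le show ?thesis by fastforce
  next
    case False
    moreover have "gdist E' a b \<noteq> enat n" using ne n by simp
    ultimately have "(a, b) \<notin> E' ^^ n" by (auto simp: gdist_eq_enat_iff)
    with that[of E n] G_E' path n le show ?thesis by fastforce
  qed
  have "sym ?G" using \<open>sym E\<close> \<open>sym E'\<close> by (rule sym_Int)
  from relpow_edge_outside_near_ends[OF F(2-4) this] F(1) show ?thesis by blast
qed

section \<open>The coupling of a single pair\<close>

definition coup_weight :: "real \<Rightarrow> real \<Rightarrow> bool \<times> bool \<times> bool \<Rightarrow> real" where
  "coup_weight p p' v =
     (if v = (True, True, False) then min p p'
      else if v = (True, False, True) then p - min p p'
      else if v = (False, True, True) then max p p' - p
      else if v = (False, False, False) then 1 - max p p'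
      else 0)"

lemma UNIV_bool3: "(UNIV :: (bool \<times> bool \<times> bool) set) =
  {(True, True, False), (True, False, True), (False, True, True), (False, False, False),
   (True, True, True), (True, False, False), (False, True, False), (False, False, True)}"
  by (auto simp: UNIV_bool)

context
  fixes p p' :: real
  assumes p: "0 \<le> p" "p \<le> 1" and p': "0 \<le> p'" "p' \<le> 1"
begin

lemma pmf_coup: "pmf (coup p p') = coup_weight p p'"
proof -
  have nonneg: "0 \<le> coup_weight p p' v" for v using p p' by (auto simp: coup_weight_def)
  have "(\<Sum>v\<in>UNIV. coup_weight p p' v) = 1" by (simp add: UNIV_bool3 coup_weight_def)
  then have "(\<integral>\<^sup>+v. ennreal (coup_weight p p' v) \<partial>count_space UNIV) = 1"
    by (simp add: nn_integral_count_space_finite sum_ennreal nonneg)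
  moreover have "coup p p' = embed_pmf (coup_weight p p')"
    unfolding coup_def coup_weight_def[abs_def] ..
  ultimately show ?thesis using pmf_embed_pmf[of "coup_weight p p'"] nonneg by auto
qed

lemma coup_K_iff_disagree: "v \<in> set_pmf (coup p p') \<Longrightarrow> snd (snd v) \<longleftrightarrow> fst v \<noteq> fst (snd v)"
  by (cases v) (auto simp: set_pmf_eq pmf_coup coup_weight_def split: if_splits)

lemma prob_coup_K: "measure_pmf.prob (coup p p') {v. snd (snd v)} = \<bar>p - p'\<bar>"
proof -
  have "{v. snd (snd v)} = {(True, False, True), (False, True, True), (True, True, True), (False, False, True)}"
    by auto
  then show ?thesis by (simp add: measure_measure_pmf_finite pmf_coup coup_weight_def)
qed

lemma prob_coup_not_X: "measure_pmf.prob (coup p p') {v. \<not> fst v} = 1 - p"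
proof -
  have "{v. \<not> fst v} = {(False, True, True), (False, False, False), (False, True, False), (False, False, True)}"
    by auto
  then show ?thesis by (simp add: measure_measure_pmf_finite pmf_coup coup_weight_def)
qed

end

abbreviation vacant :: "bool \<times> bool \<times> bool" where
  "vacant \<equiv> (False, False, False)"

lemma finite_pairsN: "finite (pairsN N)"
  by (rule finite_subset[of _ "{..<N} \<times> {..<N}"]) (auto simp: pairsN_def)

lemma wN_commute: "wN lam N i j = wN lam N j i"
  by (simp add: wN_def mult.commute)

lemma sym_edgesG: "sym (edgesG \<omega>)"
  unfolding edgesG_def Xhat_def sym_def by (auto simp: min.commute max.commute)

lemma sym_edgesG': "sym (edgesG' \<omega>)"
  unfolding edgesG'_def Xhat'_def sym_def by (auto simp: min.commute max.commute)

lemma Kc_commute: "Kc \<omega> i j = Kc \<omega> j i"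
  unfolding Kc_def by (auto simp: min.commute max.commute)

locale capacity_model =
  fixes h :: "real \<Rightarrow> real" and lam :: "nat \<Rightarrow> nat \<Rightarrow> real" and N :: nat
  assumes lam_pos: "\<And>i. i < N \<Longrightarrow> 0 < lam N i"
    and h_range: "\<And>x. 0 \<le> x \<Longrightarrow> 0 \<le> h x \<and> h x \<le> 1"
begin

lemma wN_nonneg:
  assumes "i < N" "j < N"
  shows "0 \<le> wN lam N i j"
proof -
  have "0 < lN lam N" unfolding lN_def using assms lam_pos by (intro sum_pos) auto
  then show ?thesis unfolding wN_def using assms lam_pos by (simp add: less_imp_le)
qed

lemma pN_range: "i < N \<Longrightarrow> j < N \<Longrightarrow> 0 \<le> pN lam N i j \<and> pN lam N i j \<le> 1"
  using wN_nonneg by (auto simp: pN_def)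

lemma pN'_range: "i < N \<Longrightarrow> j < N \<Longrightarrow> 0 \<le> pN' h lam N i j \<and> pN' h lam N i j \<le> 1"
  using wN_nonneg h_range by (simp add: pN'_def)

lemma edge_pmf_support:
  assumes "\<omega> \<in> set_pmf (edge_pmf h lam N)"
  shows "x \<notin> pairsN N \<Longrightarrow> \<omega> x = vacant"
    and "x \<in> pairsN N \<Longrightarrow> \<omega> x \<in> set_pmf (coup (pN lam N (fst x) (snd x)) (pN' h lam N (fst x) (snd x)))"
  using assms unfolding edge_pmf_def set_Pi_pmf[OF finite_pairsN] PiE_dflt_def
  by (cases x; auto)+

context
  fixes \<omega> assumes \<omega>: "\<omega> \<in> set_pmf (edge_pmf h lam N)"
begin

lemma Kc_iff_Xhat_ne: "Kc \<omega> i j \<longleftrightarrow> Xhat \<omega> i j \<noteq> Xhat' \<omega> i j"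
proof (cases "(min i j, max i j) \<in> pairsN N \<and> i \<noteq> j")
  case True
  then have "min i j < N" "max i j < N" by (auto simp: pairsN_def)
  moreover have "\<omega> (min i j, max i j) \<in>
      set_pmf (coup (pN lam N (min i j) (max i j)) (pN' h lam N (min i j) (max i j)))"
    using edge_pmf_support(2)[OF \<omega>, of "(min i j, max i j)"] True by simp
  ultimately have "snd (snd (\<omega> (min i j, max i j))) \<longleftrightarrow>
      fst (\<omega> (min i j, max i j)) \<noteq> fst (snd (\<omega> (min i j, max i j)))"
    using coup_K_iff_disagree pN_range pN'_range by blast
  with True show ?thesis unfolding Kc_def Xhat_def Xhat'_def by simp
next
  case False
  then show ?thesis using edge_pmf_support(1)[OF \<omega>, of "(min i j, max i j)"]
    unfolding Kc_def Xhat_def Xhat'_def by auto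
qed

lemma Kc_imp_nodes:
  assumes "Kc \<omega> i j"
  shows "i < N \<and> j < N \<and> i \<noteq> j"
proof -
  have "(min i j, max i j) \<in> pairsN N"
  proof (rule ccontr)
    assume "(min i j, max i j) \<notin> pairsN N"
    then have "\<omega> (min i j, max i j) = vacant" by (rule edge_pmf_support(1)[OF \<omega>])
    with assms show False by (simp add: Kc_def)
  qed
  with assms show ?thesis unfolding pairsN_def Kc_def by auto
qed

lemma Kc_imp_low_capacity:
  assumes "\<omega> \<in> eventA lam \<xi> N" and "Kc \<omega> i j"
  shows "lam N i \<le> real N powr \<xi>"
proof (rule ccontr)
  assume "\<not> lam N i \<le> real N powr \<xi>"
  moreover have "i < N" "j < N" "i \<noteq> j" using Kc_imp_nodes[OF \<open>Kc \<omega> i j\<close>] by auto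
  ultimately have "Kdeg \<omega> N i = 0" using assms(1) by (force simp: eventA_def sum_eq_0_iff not_le)
  with \<open>j < N\<close> \<open>i \<noteq> j\<close> \<open>Kc \<omega> i j\<close> show False
    by (force simp: Kdeg_def sum_eq_0_iff)
qed

end

end

text \<open>Unlike \<open>measure_pmf_prob_product\<close>, no countability of \<open>A\<close> and \<open>B\<close> is needed.\<close>
lemma measure_pmf_Times:
  "measure_pmf.prob (pair_pmf M M') (A \<times> B) = measure_pmf.prob M A * measure_pmf.prob M' B"
proof -
  have "measure_pmf.prob (pair_pmf M M') (A \<times> B) =
      measure_pmf.prob (pair_pmf M M') ((A \<inter> set_pmf M) \<times> (B \<inter> set_pmf M'))"
    by (metis measure_Int_set_pmf set_pair_pmf Times_Int_Times)
  also have "\<dots> = measure_pmf.prob M (A \<inter> set_pmf M) * measure_pmf.prob M' (B \<inter> set_pmf M')"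
    by (intro measure_pmf_prob_product countable_Int2 countable_set_pmf)
  finally show ?thesis by (simp add: measure_Int_set_pmf)
qed

lemma measure_Pi_pmf_insert_fun_upd:
  assumes "finite A" "x \<notin> A"
  shows "measure_pmf.prob (Pi_pmf (insert x A) d p) {f. P (f x) \<and> Q (f(x := d))}
       = measure_pmf.prob (p x) {y. P y} * measure_pmf.prob (Pi_pmf A d p) {f. Q (f(x := d))}"
proof -
  have "(\<lambda>(y, f). f(x := y)) -` {f. P (f x) \<and> Q (f(x := d))} = {y. P y} \<times> {f. Q (f(x := d))}"
    by auto
  then show ?thesis by (simp only: Pi_pmf_insert[OF assms] measure_map_pmf measure_pmf_Times)
qed

lemma measure_pmf_eq_sum_set_pmf:
  assumes "finite (set_pmf M)"
  shows "measure_pmf.prob M S = (\<Sum>w\<in>set_pmf M. pmf M w * (if w \<in> S then 1 else 0))"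
proof -
  have "measure_pmf.prob M S = measure_pmf.prob M (set_pmf M \<inter> S)"
    by (metis Int_commute measure_Int_set_pmf)
  also have "\<dots> = sum (pmf M) (set_pmf M \<inter> S)"
    using assms by (simp add: measure_measure_pmf_finite)
  also have "\<dots> = (\<Sum>w\<in>set_pmf M. if w \<in> S then pmf M w else 0)"
    using assms by (rule sum.inter_restrict)
  also have "\<dots> = (\<Sum>w\<in>set_pmf M. pmf M w * (if w \<in> S then 1 else 0))"
    by (intro sum.cong) auto
  finally show ?thesis .
qed

lemma measure_pair_pmf_le:
  assumes A: "finite (set_pmf A)" and B: "finite (set_pmf B)"
    and le: "\<And>a. a \<in> set_pmf A \<Longrightarrow> measure_pmf.prob B {b. (a, b) \<in> T} \<le> c"
  shows "measure_pmf.prob (pair_pmf A B) T \<le> c"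
proof -
  have "measure_pmf.prob (pair_pmf A B) T =
      (\<Sum>z\<in>set_pmf A \<times> set_pmf B. pmf (pair_pmf A B) z * (if z \<in> T then 1 else 0))"
    using A B by (simp add: measure_pmf_eq_sum_set_pmf)
  also have "\<dots> = (\<Sum>(a, b)\<in>set_pmf A \<times> set_pmf B. pmf A a * (pmf B b * (if (a, b) \<in> T then 1 else 0)))"
    by (intro sum.cong) (auto simp: pmf_pair)
  also have "\<dots> = (\<Sum>a\<in>set_pmf A. pmf A a * (\<Sum>b\<in>set_pmf B. pmf B b * (if (a, b) \<in> T then 1 else 0)))"
    by (simp only: sum.cartesian_product[symmetric] sum_distrib_left)
  also have "\<dots> = (\<Sum>a\<in>set_pmf A. pmf A a * measure_pmf.prob B {b. (a, b) \<in> T})"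
    using measure_pmf_eq_sum_set_pmf[OF B] by simp
  also have "\<dots> \<le> (\<Sum>a\<in>set_pmf A. pmf A a * c)"
    by (intro sum_mono mult_left_mono le) auto
  also have "\<dots> = c"
    using A by (simp add: sum_distrib_right[symmetric] sum_pmf_eq_1)
  finally show ?thesis .
qed

lemma measure_pmf_Un_le: "measure_pmf.prob M (A \<union> B) \<le> measure_pmf.prob M A + measure_pmf.prob M B"
  by (rule measure_subadditive) (simp_all add: measure_pmf.emeasure_finite)

lemma sum_Times_fst_snd:
  fixes f :: "'a \<Rightarrow> 'b::comm_semiring_1"
  shows "(\<Sum>z\<in>A \<times> A. f (fst z) + f (snd z)) = 2 * of_nat (card A) * sum f A"
proof -
  have "(\<Sum>z\<in>A \<times> A. f (fst z) + f (snd z)) = (\<Sum>x\<in>A. \<Sum>y\<in>A. f x + f y)"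
    by (simp add: sum.cartesian_product')
  also have "\<dots> = (\<Sum>x\<in>A. of_nat (card A) * f x + sum f A)"
    by (simp add: sum.distrib)
  also have "\<dots> = of_nat (card A) * sum f A + of_nat (card A) * sum f A"
    by (simp add: sum.distrib sum_distrib_left)
  also have "\<dots> = 2 * of_nat (card A) * sum f A"
    by (metis mult_2 mult.assoc)
  finally show ?thesis .
qed

lemma node_pair_pmf_Sigma: "node_pair_pmf N = pmf_of_set (SIGMA a:{..<N}. {..<N} - {a})"
  unfolding node_pair_pmf_def by (rule arg_cong[where f = pmf_of_set]) auto

lemma map_fst_node_pair_pmf:
  assumes "2 \<le> N"
  shows "map_pmf fst (node_pair_pmf N) = pmf_of_set {..<N}"
proof (rule pmf_eqI)
  fix a
  let ?S = "SIGMA a:{..<N}. {..<N} - {a}"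
  have "(0, 1) \<in> ?S" using assms by auto
  then have S: "finite ?S" "?S \<noteq> {}" "card ?S = N * (N - 1)" by (auto simp: card_SigmaI)
  have "?S \<inter> fst -` {a} = (if a < N then {a} \<times> ({..<N} - {a}) else {})" by auto
  then have "card (?S \<inter> fst -` {a}) = (if a < N then N - 1 else 0)" by simp
  moreover have "{..<N} \<noteq> {}" using assms by (metis lessThan_empty_iff not_numeral_le_zero)
  ultimately show "pmf (map_pmf fst (node_pair_pmf N)) a = pmf (pmf_of_set {..<N}) a"
    using S assms by (auto simp: node_pair_pmf_Sigma pmf_map measure_pmf_of_set)
qed

lemma map_snd_node_pair_pmf:
  assumes "2 \<le> N"
  shows "map_pmf snd (node_pair_pmf N) = pmf_of_set {..<N}"
proof -
  let ?S = "SIGMA a:{..<N}. {..<N} - {a}" and ?swap = "\<lambda>(x, y). (y, x)"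
  have "(0, 1) \<in> ?S" using assms by auto
  then have "map_pmf ?swap (node_pair_pmf N) = pmf_of_set (?swap ` ?S)"
    unfolding node_pair_pmf_Sigma by (intro map_pmf_of_set_inj) (auto simp: inj_on_def)
  also have "?swap ` ?S = ?S" by auto
  finally have swap: "map_pmf ?swap (node_pair_pmf N) = node_pair_pmf N"
    by (simp only: node_pair_pmf_Sigma)
  have "map_pmf snd (node_pair_pmf N) = map_pmf fst (map_pmf ?swap (node_pair_pmf N))"
    by (simp add: pmf.map_comp comp_def case_prod_beta)
  with swap map_fst_node_pair_pmf[OF assms] show ?thesis by simp
qed

lemma set_node_pair_pmf:
  assumes "2 \<le> N"
  shows "set_pmf (node_pair_pmf N) = (SIGMA a:{..<N}. {..<N} - {a})"
proof -
  have "(0, 1) \<in> (SIGMA a:{..<N}. {..<N} - {a})" using assms by auto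
  then show ?thesis unfolding node_pair_pmf_Sigma by (intro set_pmf_of_set) auto
qed

lemma prob_node_pair_pmf_fst:
  assumes "2 \<le> N"
  shows "measure_pmf.prob (pair_pmf (node_pair_pmf N) Q) {((a1, a2), \<omega>). P a1 \<omega>}
       = measure_pmf.prob (pair_pmf (pmf_of_set {..<N}) Q) {(a, \<omega>). P a \<omega>}"
proof -
  have eq: "{((a1, a2), \<omega>). P a1 \<omega>} = apfst fst -` {(a, \<omega>). P a \<omega>}" by auto
  show ?thesis unfolding eq
    by (simp only: map_fst_node_pair_pmf[OF assms, symmetric] pair_map_pmf1 measure_map_pmf)
qed

lemma prob_node_pair_pmf_snd:
  assumes "2 \<le> N"
  shows "measure_pmf.prob (pair_pmf (node_pair_pmf N) Q) {((a1, a2), \<omega>). P a2 \<omega>}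
       = measure_pmf.prob (pair_pmf (pmf_of_set {..<N}) Q) {(a, \<omega>). P a \<omega>}"
proof -
  have eq: "{((a1, a2), \<omega>). P a2 \<omega>} = apfst snd -` {(a, \<omega>). P a \<omega>}" by auto
  show ?thesis unfolding eq
    by (simp only: map_snd_node_pair_pmf[OF assms, symmetric] pair_map_pmf1 measure_map_pmf)
qed

lemma prob_H_neq_le_prob_H_gt_0:
  assumes "2 \<le> N"
  shows "prob_H_neq h lam N \<le> prob_H_gt h lam N 0"
proof -
  let ?M = "pair_pmf (node_pair_pmf N) (edge_pmf h lam N)"
  let ?S = "{((a1, a2), \<omega>). gdist (edgesG \<omega>) a1 a2 \<noteq> gdist (edgesG' \<omega>) a1 a2}"
  have "gdist E a1 a2 \<noteq> enat 0" if "a1 \<noteq> a2" for E a1 a2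
    using that by (auto simp: gdist_eq_enat_iff)
  then have "?S \<inter> set_pmf ?M \<subseteq> {((a1, a2), \<omega>). gdist (edgesG \<omega>) a1 a2 > enat 0}"
    using set_node_pair_pmf[OF assms] by (auto simp: zero_enat_def[symmetric])
  then have "measure_pmf.prob ?M (?S \<inter> set_pmf ?M) \<le> prob_H_gt h lam N 0"
    unfolding prob_H_gt_def by (intro measure_pmf.finite_measure_mono) auto
  then show ?thesis by (simp only: prob_H_neq_def measure_Int_set_pmf)
qed

section \<open>Removing one pair of nodes\<close>

definition edge_coup :: "(real \<Rightarrow> real) \<Rightarrow> (nat \<Rightarrow> nat \<Rightarrow> real) \<Rightarrow> nat \<Rightarrow> nat \<times> nat
    \<Rightarrow> (bool \<times> bool \<times> bool) pmf" where
  "edge_coup h lam N = (\<lambda>(i, j). coup (pN lam N i j) (pN' h lam N i j))"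

lemma edge_coup_min_max: "edge_coup h lam N (min i j, max i j) = coup (pN lam N i j) (pN' h lam N i j)"
  by (cases "i \<le> j") (simp_all add: edge_coup_def pN_def pN'_def wN_commute[of lam N i j] min_def max_def)

lemma finite_set_edge_pmf: "finite (set_pmf (edge_pmf h lam N))"
  unfolding edge_pmf_def set_Pi_pmf[OF finite_pairsN]
  by (rule finite_PiE_dflt[OF finite_pairsN]) (auto simp: case_prod_beta)

lemma prob_edge_pmf_split_pair:
  assumes "x \<in> pairsN N"
  shows "measure_pmf.prob (edge_pmf h lam N) {\<omega>. P (\<omega> x) \<and> Q (\<omega> (x := vacant))}
       = measure_pmf.prob (edge_coup h lam N x) {y. P y} *
         measure_pmf.prob (Pi_pmf (pairsN N - {x}) vacant (edge_coup h lam N))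
           {\<omega>. Q (\<omega> (x := vacant))}"
proof -
  have "edge_pmf h lam N = Pi_pmf (insert x (pairsN N - {x})) vacant (edge_coup h lam N)"
    using assms by (simp add: edge_pmf_def edge_coup_def insert_absorb)
  then show ?thesis by (simp only:) (rule measure_Pi_pmf_insert_fun_upd, use finite_pairsN in auto)
qed

lemma edgesG_fun_upd_remove_subset: "edgesG (\<omega> (x := vacant)) \<subseteq> edgesG \<omega>"
  unfolding edgesG_def Xhat_def by auto

lemma edgesG_fun_upd_remove_non_edge: "\<not> fst (\<omega> x) \<Longrightarrow> edgesG (\<omega> (x := vacant)) = edgesG \<omega>"
  unfolding edgesG_def Xhat_def by auto

lemma edgesG_subset_fun_upd_remove:
  "edgesG \<omega> \<subseteq> edgesG (\<omega> ((min i j, max i j) := vacant)) \<union> {(i, j), (j, i)}"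
  unfolding edgesG_def Xhat_def by (auto simp: min_def max_def split: if_splits)

definition graph_ball :: "config \<Rightarrow> nat \<Rightarrow> nat \<Rightarrow> nat \<Rightarrow> nat set" where
  "graph_ball \<omega> N a s = {j. j < N \<and> gdist (edgesG \<omega>) a j \<le> enat s}"

definition in_small_ball :: "real \<Rightarrow> nat \<Rightarrow> nat \<Rightarrow> nat \<Rightarrow> nat \<Rightarrow> config \<Rightarrow> bool" where
  "in_small_ball b N s a i \<omega> \<longleftrightarrow>
     i \<in> graph_ball \<omega> N a s \<and> real (card (graph_ball \<omega> N a s)) \<le> real N powr b"

lemma graph_ball_fun_upd_remove_subset:
  "graph_ball (\<omega> (x := vacant)) N a s \<subseteq> graph_ball \<omega> N a s"
  unfolding graph_ball_def gdist_le_enat_iff using relpow_mono[OF edgesG_fun_upd_remove_subset] by blast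

lemma graph_ball_fun_upd_remove:
  assumes "i \<in> graph_ball \<omega> N a s" "j < N"
  shows "i \<in> graph_ball (\<omega> ((min i j, max i j) := vacant)) N a s \<or>
         j \<in> graph_ball (\<omega> ((min i j, max i j) := vacant)) N a s"
proof -
  let ?E0 = "edgesG (\<omega> ((min i j, max i j) := vacant))"
  obtain n where n: "n \<le> s" "(a, i) \<in> edgesG \<omega> ^^ n" "i < N"
    using assms(1) unfolding graph_ball_def gdist_le_enat_iff by blast
  from relpow_subset_insert_edge[OF edgesG_subset_fun_upd_remove n(2)]
  have "\<exists>m\<le>s. (a, i) \<in> ?E0 ^^ m \<or> (a, j) \<in> ?E0 ^^ m"
    using n(1) by (meson less_imp_le order_refl order_trans)
  then show ?thesis unfolding graph_ball_def gdist_le_enat_iff using n(3) assms(2) by blast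
qed

lemma in_small_ball_fun_upd_remove:
  assumes "in_small_ball b N s a i \<omega>" "j < N"
  shows "in_small_ball b N s a i (\<omega> ((min i j, max i j) := vacant)) \<or>
         in_small_ball b N s a j (\<omega> ((min i j, max i j) := vacant))"
proof -
  let ?\<omega>0 = "\<omega> ((min i j, max i j) := vacant)"
  have "card (graph_ball ?\<omega>0 N a s) \<le> card (graph_ball \<omega> N a s)"
    by (rule card_mono[OF _ graph_ball_fun_upd_remove_subset]) (simp add: graph_ball_def)
  with assms graph_ball_fun_upd_remove show ?thesis
    unfolding in_small_ball_def by (smt (verit) of_nat_le_iff)
qed

lemma sum_prob_in_small_ball_le:
  "(\<Sum>i<N. measure_pmf.prob (edge_pmf h lam N) {\<omega>. in_small_ball b N s a i \<omega>}) \<le> real N powr b"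
proof -
  let ?Q = "edge_pmf h lam N"
  have count: "(\<Sum>i<N. if in_small_ball b N s a i \<omega> then 1 else 0) \<le> real N powr b" for \<omega>
  proof (cases "real (card (graph_ball \<omega> N a s)) \<le> real N powr b")
    case True
    then have "{..<N} \<inter> {i. in_small_ball b N s a i \<omega>} = graph_ball \<omega> N a s"
      unfolding in_small_ball_def graph_ball_def by auto
    with True show ?thesis by (simp add: sum.If_cases)
  qed (simp add: in_small_ball_def)
  have "(\<Sum>i<N. measure_pmf.prob ?Q {\<omega>. in_small_ball b N s a i \<omega>})
      = (\<Sum>\<omega>\<in>set_pmf ?Q. pmf ?Q \<omega> * (\<Sum>i<N. if in_small_ball b N s a i \<omega> then 1 else 0))"
    by (simp add: measure_pmf_eq_sum_set_pmf[OF finite_set_edge_pmf] sum_distrib_left sum.swap[of _ "{..<N}"])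
  also have "\<dots> \<le> (\<Sum>\<omega>\<in>set_pmf ?Q. pmf ?Q \<omega> * real N powr b)"
    by (intro sum_mono mult_left_mono count) simp
  also have "\<dots> = real N powr b"
    by (simp add: sum_distrib_right[symmetric] sum_pmf_eq_1[OF finite_set_edge_pmf])
  finally show ?thesis .
qed

section \<open>Discrepancies near small balls\<close>

definition close_coupling :: "(real \<Rightarrow> real) \<Rightarrow> (nat \<Rightarrow> nat \<Rightarrow> real) \<Rightarrow> real \<Rightarrow> nat \<Rightarrow> real \<Rightarrow> bool" where
  "close_coupling h lam \<xi> N \<epsilon> \<longleftrightarrow>
     (\<forall>i<N. \<forall>j<N. i \<noteq> j \<longrightarrow> lam N i \<le> real N powr \<xi> \<longrightarrow> lam N j \<le> real N powr \<xi> \<longrightarrow>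
        \<bar>pN lam N i j - pN' h lam N i j\<bar> \<le> \<epsilon> \<and> pN lam N i j \<le> 1 / 2)"

definition near_discrepancy :: "(nat \<Rightarrow> nat \<Rightarrow> real) \<Rightarrow> real \<Rightarrow> nat \<Rightarrow> nat \<Rightarrow> config \<Rightarrow> nat \<Rightarrow> bool" where
  "near_discrepancy lam \<xi> N t \<omega> a \<longleftrightarrow>
     (\<exists>i j. i \<in> graph_ball \<omega> N a (t - 1) \<and> j < N \<and> i \<noteq> j \<and> Kc \<omega> i j \<and>
        lam N i \<le> real N powr \<xi> \<and> lam N j \<le> real N powr \<xi>)"

context capacity_model
begin

text \<open>\<open>K\<^sub>i\<^sub>j\<close> depends only on the pair \<open>(i, j)\<close>; once that pair is deleted, \<open>E\<close> implies \<open>B\<close>,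
  and deleting a pair that is not an edge of \<open>G\<^sub>N\<close> does not affect \<open>B\<close>.\<close>
lemma prob_Kc_le_prob_pair_deleted:
  assumes ij: "i < N" "j < N" "i \<noteq> j"
    and E_B: "\<And>\<omega>. E \<omega> \<Longrightarrow> B (\<omega> ((min i j, max i j) := vacant))"
    and B_non_edge: "\<And>\<omega>. \<not> fst (\<omega> (min i j, max i j)) \<Longrightarrow> B (\<omega> ((min i j, max i j) := vacant)) \<Longrightarrow> B \<omega>"
  shows "(1 - pN lam N i j) * measure_pmf.prob (edge_pmf h lam N) {\<omega>. Kc \<omega> i j \<and> E \<omega>}
         \<le> \<bar>pN lam N i j - pN' h lam N i j\<bar> * measure_pmf.prob (edge_pmf h lam N) {\<omega>. B \<omega>}"
proof -
  let ?P = "measure_pmf.prob (edge_pmf h lam N)"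
  define x where "x = (min i j, max i j)"
  define r where "r = measure_pmf.prob (Pi_pmf (pairsN N - {x}) vacant (edge_coup h lam N))
                        {\<omega>. B (\<omega> (x := vacant))}"
  have x: "x \<in> pairsN N" using ij by (auto simp: x_def pairsN_def min_def max_def)
  have coup_x: "edge_coup h lam N x = coup (pN lam N i j) (pN' h lam N i j)"
    unfolding x_def by (rule edge_coup_min_max)
  have p: "0 \<le> pN lam N i j" "pN lam N i j \<le> 1" and p': "0 \<le> pN' h lam N i j" "pN' h lam N i j \<le> 1"
    using pN_range pN'_range ij by auto
  have "?P {\<omega>. Kc \<omega> i j \<and> E \<omega>} \<le> ?P {\<omega>. snd (snd (\<omega> x)) \<and> B (\<omega> (x := vacant))}"
    using E_B by (intro measure_pmf.finite_measure_mono) (auto simp: x_def Kc_def)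
  also have "\<dots> = \<bar>pN lam N i j - pN' h lam N i j\<bar> * r"
    using prob_edge_pmf_split_pair[OF x, where P = "\<lambda>y. snd (snd y)" and Q = B]
    by (simp add: coup_x prob_coup_K[OF p p'] r_def)
  finally have Kc: "?P {\<omega>. Kc \<omega> i j \<and> E \<omega>} \<le> \<bar>pN lam N i j - pN' h lam N i j\<bar> * r" .
  have "(1 - pN lam N i j) * r = ?P {\<omega>. \<not> fst (\<omega> x) \<and> B (\<omega> (x := vacant))}"
    using prob_edge_pmf_split_pair[OF x, where P = "\<lambda>y. \<not> fst y" and Q = B]
    by (simp add: coup_x prob_coup_not_X[OF p p'] r_def)
  also have "\<dots> \<le> ?P {\<omega>. B \<omega>}"
    using B_non_edge by (intro measure_pmf.finite_measure_mono) (auto simp: x_def)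
  finally have "\<bar>pN lam N i j - pN' h lam N i j\<bar> * ((1 - pN lam N i j) * r)
      \<le> \<bar>pN lam N i j - pN' h lam N i j\<bar> * ?P {\<omega>. B \<omega>}"
    by (intro mult_left_mono) auto
  moreover have "(1 - pN lam N i j) * ?P {\<omega>. Kc \<omega> i j \<and> E \<omega>}
      \<le> (1 - pN lam N i j) * (\<bar>pN lam N i j - pN' h lam N i j\<bar> * r)"
    using Kc p by (intro mult_left_mono) auto
  ultimately show ?thesis by (simp add: mult.left_commute)
qed

lemma prob_Kc_in_small_ball_le:
  assumes ij: "i < N" "j < N" "i \<noteq> j"
    and close: "\<bar>pN lam N i j - pN' h lam N i j\<bar> \<le> \<epsilon>" and sparse: "pN lam N i j \<le> 1 / 2"
  shows "measure_pmf.prob (edge_pmf h lam N) {\<omega>. Kc \<omega> i j \<and> in_small_ball b N s a i \<omega>}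
    \<le> 2 * \<epsilon> * (measure_pmf.prob (edge_pmf h lam N) {\<omega>. in_small_ball b N s a i \<omega>}
                + measure_pmf.prob (edge_pmf h lam N) {\<omega>. in_small_ball b N s a j \<omega>})"
proof -
  let ?P = "measure_pmf.prob (edge_pmf h lam N)"
  let ?X = "?P {\<omega>. Kc \<omega> i j \<and> in_small_ball b N s a i \<omega>}"
  let ?Pi = "?P {\<omega>. in_small_ball b N s a i \<omega>}" and ?Pj = "?P {\<omega>. in_small_ball b N s a j \<omega>}"
  let ?B = "\<lambda>\<omega>. in_small_ball b N s a i \<omega> \<or> in_small_ball b N s a j \<omega>"
  have "(1 - pN lam N i j) * ?X \<le> \<bar>pN lam N i j - pN' h lam N i j\<bar> * ?P {\<omega>. ?B \<omega>}"
  proof (rule prob_Kc_le_prob_pair_deleted[OF ij])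
    show "?B (\<omega> ((min i j, max i j) := vacant))" if "in_small_ball b N s a i \<omega>" for \<omega>
      using in_small_ball_fun_upd_remove[OF that ij(2)] .
    show "?B \<omega>" if "\<not> fst (\<omega> (min i j, max i j))" "?B (\<omega> ((min i j, max i j) := vacant))" for \<omega>
      using that by (simp add: in_small_ball_def graph_ball_def edgesG_fun_upd_remove_non_edge)
  qed
  also have "\<dots> \<le> \<epsilon> * (?Pi + ?Pj)"
  proof (rule mult_mono)
    show "?P {\<omega>. ?B \<omega>} \<le> ?Pi + ?Pj" unfolding Collect_disj_eq by (rule measure_pmf_Un_le)
    show "0 \<le> \<epsilon>" using close abs_ge_zero order_trans by blast
  qed (use close in simp_all)
  finally have "(1 - pN lam N i j) * ?X \<le> \<epsilon> * (?Pi + ?Pj)" .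
  moreover have "?X / 2 \<le> (1 - pN lam N i j) * ?X"
    using mult_right_mono[of "1 / 2" "1 - pN lam N i j" ?X] sparse by simp
  ultimately have "?X \<le> 2 * (\<epsilon> * (?Pi + ?Pj))" by linarith
  then show ?thesis by (simp only: mult.assoc)
qed

lemma prob_near_discrepancy_small_ball_le:
  assumes close: "close_coupling h lam \<xi> N \<epsilon>" and "0 \<le> \<epsilon>"
  shows "measure_pmf.prob (edge_pmf h lam N)
           {\<omega>. near_discrepancy lam \<xi> N t \<omega> a \<and> real (card (graph_ball \<omega> N a (t - 1))) \<le> real N powr b}
         \<le> 4 * \<epsilon> * real N * real N powr b"
proof -
  let ?P = "measure_pmf.prob (edge_pmf h lam N)"
  let ?low = "\<lambda>i. lam N i \<le> real N powr \<xi>"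
  let ?L = "{(i, j). i < N \<and> j < N \<and> i \<noteq> j \<and> ?low i \<and> ?low j}"
  let ?A = "\<lambda>(i, j). {\<omega>. Kc \<omega> i j \<and> in_small_ball b N (t - 1) a i \<omega>}"
  let ?Pb = "\<lambda>i. ?P {\<omega>. in_small_ball b N (t - 1) a i \<omega>}"
  have "?P {\<omega>. near_discrepancy lam \<xi> N t \<omega> a \<and> real (card (graph_ball \<omega> N a (t - 1))) \<le> real N powr b}
      \<le> ?P (\<Union>z\<in>?L. ?A z)"
    by (intro measure_pmf.finite_measure_mono, force simp: near_discrepancy_def in_small_ball_def graph_ball_def)
       simp
  also have "\<dots> \<le> (\<Sum>z\<in>?L. ?P (?A z))"
    by (rule measure_pmf.finite_measure_subadditive_finite)
       (auto intro: finite_subset[of _ "{..<N} \<times> {..<N}"])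
  also have "\<dots> \<le> (\<Sum>z\<in>?L. 2 * \<epsilon> * (?Pb (fst z) + ?Pb (snd z)))"
    using close by (intro sum_mono) (auto simp: close_coupling_def intro!: prob_Kc_in_small_ball_le)
  also have "\<dots> \<le> (\<Sum>z\<in>{..<N} \<times> {..<N}. 2 * \<epsilon> * (?Pb (fst z) + ?Pb (snd z)))"
    using \<open>0 \<le> \<epsilon>\<close> by (intro sum_mono2) auto
  also have "\<dots> = 2 * \<epsilon> * (2 * real N * (\<Sum>i<N. ?Pb i))"
    using sum_Times_fst_snd[of ?Pb "{..<N}"] by (simp add: sum_distrib_left[symmetric])
  also have "\<dots> \<le> 2 * \<epsilon> * (2 * real N * real N powr b)"
    using sum_prob_in_small_ball_le \<open>0 \<le> \<epsilon>\<close> by (intro mult_left_mono) auto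
  finally show ?thesis by (simp add: algebra_simps)
qed

lemma near_discrepancy_if_distances_differ:
  assumes \<omega>: "\<omega> \<in> set_pmf (edge_pmf h lam N)" and A: "\<omega> \<in> eventA lam \<xi> N"
    and le: "gdist (edgesG \<omega>) a1 a2 \<le> enat (2 * t)"
    and ne: "gdist (edgesG \<omega>) a1 a2 \<noteq> gdist (edgesG' \<omega>) a1 a2"
  shows "near_discrepancy lam \<xi> N t \<omega> a1 \<or> near_discrepancy lam \<xi> N t \<omega> a2"
proof -
  let ?G = "edgesG \<omega> \<inter> edgesG' \<omega>"
  obtain u v where uv: "(u, v) \<in> (edgesG \<omega> \<union> edgesG' \<omega>) - ?G"
    and near: "(\<exists>k\<le>t - 1. (a1, u) \<in> ?G ^^ k) \<or> (\<exists>k\<le>t - 1. (a2, v) \<in> ?G ^^ k)"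
    using gdist_differ_imp_edge_near_ends[OF sym_edgesG sym_edgesG' le ne] by blast
  have K: "Kc \<omega> u v" "Kc \<omega> v u"
    using uv Kc_iff_Xhat_ne[OF \<omega>] Kc_commute by (auto simp: edgesG_def edgesG'_def)
  have nodes: "u < N" "v < N" "u \<noteq> v" using Kc_imp_nodes[OF \<omega> K(1)] by auto
  have low: "lam N u \<le> real N powr \<xi>" "lam N v \<le> real N powr \<xi>"
    using Kc_imp_low_capacity[OF \<omega> A] K by auto
  have in_ball: "(a, w) \<in> ?G ^^ k \<Longrightarrow> k \<le> t - 1 \<Longrightarrow> w < N \<Longrightarrow> w \<in> graph_ball \<omega> N a (t - 1)" for a w k
    unfolding graph_ball_def gdist_le_enat_iff by (blast intro: relpow_mono[rotated])
  from near show ?thesis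
    unfolding near_discrepancy_def using nodes low K in_ball by metis
qed

lemma prob_uniform_near_discrepancy_le:
  assumes "0 < N" and close: "close_coupling h lam \<xi> N \<epsilon>" and "0 \<le> \<epsilon>"
  shows "measure_pmf.prob (pair_pmf (pmf_of_set {..<N}) (edge_pmf h lam N))
           {(a, \<omega>). near_discrepancy lam \<xi> N t \<omega> a}
         \<le> prob_ball_gt h lam N (t - 1) b + 4 * \<epsilon> * real N * real N powr b"
proof -
  let ?M = "pair_pmf (pmf_of_set {..<N}) (edge_pmf h lam N)"
  let ?small = "\<lambda>a \<omega>. real (card (graph_ball \<omega> N a (t - 1))) \<le> real N powr b"
  have "measure_pmf.prob ?M {(a, \<omega>). near_discrepancy lam \<xi> N t \<omega> a}
      \<le> measure_pmf.prob ?M ({(a, \<omega>). \<not> ?small a \<omega>} \<union>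
                              {(a, \<omega>). near_discrepancy lam \<xi> N t \<omega> a \<and> ?small a \<omega>})"
    by (intro measure_pmf.finite_measure_mono) auto
  also have "\<dots> \<le> measure_pmf.prob ?M {(a, \<omega>). \<not> ?small a \<omega>} +
                  measure_pmf.prob ?M {(a, \<omega>). near_discrepancy lam \<xi> N t \<omega> a \<and> ?small a \<omega>}"
    by (rule measure_pmf_Un_le)
  also have "measure_pmf.prob ?M {(a, \<omega>). \<not> ?small a \<omega>} = prob_ball_gt h lam N (t - 1) b"
    by (simp add: prob_ball_gt_def graph_ball_def not_le)
  also have "measure_pmf.prob ?M {(a, \<omega>). near_discrepancy lam \<xi> N t \<omega> a \<and> ?small a \<omega>}
      \<le> 4 * \<epsilon> * real N * real N powr b"
    using \<open>0 < N\<close> prob_near_discrepancy_small_ball_le[OF close \<open>0 \<le> \<epsilon>\<close>]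
    by (intro measure_pair_pmf_le) (auto simp: finite_set_edge_pmf lessThan_empty_iff)
  finally show ?thesis by simp
qed

lemma prob_H_neq_le_close_coupling:
  assumes N: "2 \<le> N" and close: "close_coupling h lam \<xi> N \<epsilon>" and "0 \<le> \<epsilon>"
  shows "prob_H_neq h lam N \<le> prob_notA h lam \<xi> N + prob_H_gt h lam N (2 * t)
           + 2 * prob_ball_gt h lam N (t - 1) b + 8 * \<epsilon> * real N * real N powr b"
proof -
  let ?M = "pair_pmf (node_pair_pmf N) (edge_pmf h lam N)"
  let ?notA = "UNIV \<times> - eventA lam \<xi> N"
  let ?far = "{((a1, a2), \<omega>). gdist (edgesG \<omega>) a1 a2 > enat (2 * t)}"
  let ?near1 = "{((a1, a2), \<omega>). near_discrepancy lam \<xi> N t \<omega> a1}"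
  let ?near2 = "{((a1, a2), \<omega>). near_discrepancy lam \<xi> N t \<omega> a2}"
  let ?S = "{((a1, a2), \<omega>). gdist (edgesG \<omega>) a1 a2 \<noteq> gdist (edgesG' \<omega>) a1 a2}"
  have "?S \<inter> set_pmf ?M \<subseteq> ?notA \<union> ?far \<union> ?near1 \<union> ?near2"
    using near_discrepancy_if_distances_differ by (fastforce simp: not_le)
  then have "measure_pmf.prob ?M (?S \<inter> set_pmf ?M) \<le> measure_pmf.prob ?M (?notA \<union> ?far \<union> ?near1 \<union> ?near2)"
    by (intro measure_pmf.finite_measure_mono) auto
  then have "prob_H_neq h lam N \<le> measure_pmf.prob ?M (?notA \<union> ?far \<union> ?near1 \<union> ?near2)"
    by (simp only: prob_H_neq_def measure_Int_set_pmf)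
  also have "\<dots> \<le> measure_pmf.prob ?M ?notA + measure_pmf.prob ?M ?far
                  + measure_pmf.prob ?M ?near1 + measure_pmf.prob ?M ?near2"
    using measure_pmf_Un_le[of ?M "?notA \<union> ?far \<union> ?near1" ?near2]
      measure_pmf_Un_le[of ?M "?notA \<union> ?far" ?near1] measure_pmf_Un_le[of ?M ?notA ?far] by linarith
  also have "measure_pmf.prob ?M ?notA = prob_notA h lam \<xi> N"
    by (simp add: prob_notA_def measure_pmf_Times)
  also have "measure_pmf.prob ?M ?far = prob_H_gt h lam N (2 * t)"
    unfolding prob_H_gt_def ..
  also have "measure_pmf.prob ?M ?near1 \<le> prob_ball_gt h lam N (t - 1) b + 4 * \<epsilon> * real N * real N powr b"
    unfolding prob_node_pair_pmf_fst[OF N, of _ "\<lambda>a \<omega>. near_discrepancy lam \<xi> N t \<omega> a"]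
    using N by (intro prob_uniform_near_discrepancy_le[OF _ close \<open>0 \<le> \<epsilon>\<close>]) auto
  also have "measure_pmf.prob ?M ?near2 \<le> prob_ball_gt h lam N (t - 1) b + 4 * \<epsilon> * real N * real N powr b"
    unfolding prob_node_pair_pmf_snd[OF N, of _ "\<lambda>a \<omega>. near_discrepancy lam \<xi> N t \<omega> a"]
    using N by (intro prob_uniform_near_discrepancy_le[OF _ close \<open>0 \<le> \<epsilon>\<close>]) auto
  finally show ?thesis by simp
qed

lemma prob_H_neq_bound:
  assumes N: "2 \<le> N" and close: "close_coupling h lam \<xi> N (D * (real N powr \<xi>) ^ 4 / real N ^ 2)"
    and "0 \<le> D"
  shows "prob_H_neq h lam N \<le> prob_notA h lam \<xi> N + prob_H_gt h lam N (2 * t)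
           + 2 * real t * prob_ball_gt h lam N (t - 1) b
           + 8 * D * real t * real N powr (-1 + b) * (real N powr \<xi>) ^ 4"
proof (cases "t = 0")
  case True
  moreover have "0 \<le> prob_notA h lam \<xi> N" by (simp add: prob_notA_def)
  ultimately show ?thesis using prob_H_neq_le_prob_H_gt_0[OF N, of h lam] by simp
next
  case False
  have "-1 + b = b - 1" by simp
  then have "real N powr (-1 + b) = real N powr b / real N" using powr_diff[of "real N" b 1] by simp
  then have "8 * (D * (real N powr \<xi>) ^ 4 / real N ^ 2) * real N * real N powr b
      = 8 * D * real N powr (-1 + b) * (real N powr \<xi>) ^ 4"
    using N by (simp add: field_simps power2_eq_square)
  also have "\<dots> \<le> 8 * D * real t * real N powr (-1 + b) * (real N powr \<xi>) ^ 4"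
  proof -
    define X where "X = real N powr (-1 + b) * (real N powr \<xi>) ^ 4"
    have "0 \<le> X" by (simp add: X_def)
    then have "X \<le> real t * X" using False mult_right_mono[of 1 "real t" X] by simp
    then have "8 * D * X \<le> 8 * D * (real t * X)" using \<open>0 \<le> D\<close> by (intro mult_left_mono) auto
    then show ?thesis by (simp add: X_def mult.assoc)
  qed
  finally have "8 * (D * (real N powr \<xi>) ^ 4 / real N ^ 2) * real N * real N powr b
      \<le> 8 * D * real t * real N powr (-1 + b) * (real N powr \<xi>) ^ 4" .
  moreover have "2 * prob_ball_gt h lam N (t - 1) b \<le> 2 * real t * prob_ball_gt h lam N (t - 1) b"
    using False by (simp add: prob_ball_gt_def mult_le_cancel_right1)
  moreover have "0 \<le> D * (real N powr \<xi>) ^ 4 / real N ^ 2" using \<open>0 \<le> D\<close> by simp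
  ultimately show ?thesis using prob_H_neq_le_close_coupling[OF N close, of t b] by linarith
qed

end

lemma prob_H_neq_bound_large_xi:
  assumes "1 / 2 \<le> \<xi>" "2 \<le> N" "0 < b"
  shows "prob_H_neq h lam N \<le> prob_notA h lam \<xi> N + prob_H_gt h lam N (2 * t)
           + 2 * real t * prob_ball_gt h lam N (t - 1) b
           + real t * real N powr (-1 + b) * (real N powr \<xi>) ^ 4"
proof (cases "t = 0")
  case True
  moreover have "0 \<le> prob_notA h lam \<xi> N" by (simp add: prob_notA_def)
  ultimately show ?thesis using prob_H_neq_le_prob_H_gt_0[OF assms(2), of h lam] by simp
next
  case False
  have "(real N powr \<xi>) ^ 4 = real N powr (4 * \<xi>)" using assms(2) by (simp add: powr_power)
  then have "real N powr (-1 + b) * (real N powr \<xi>) ^ 4 = real N powr (-1 + b + 4 * \<xi>)"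
    by (simp add: powr_add)
  also have "\<dots> \<ge> 1" using assms by (intro ge_one_powr_ge_zero) auto
  finally have "1 * 1 \<le> real t * (real N powr (-1 + b) * (real N powr \<xi>) ^ 4)"
    using False by (intro mult_mono) auto
  moreover have "prob_H_neq h lam N \<le> 1" by (simp add: prob_H_neq_def)
  moreover have "0 \<le> prob_notA h lam \<xi> N" "0 \<le> prob_H_gt h lam N (2 * t)"
    "0 \<le> 2 * real t * prob_ball_gt h lam N (t - 1) b"
    by (simp_all add: prob_notA_def prob_H_gt_def prob_ball_gt_def)
  ultimately show ?thesis by (simp add: mult.assoc)
qed

section \<open>Asymptotics of the connection probabilities\<close>

lemma one_minus_exp_minus_bounds:
  fixes w :: real
  assumes "0 \<le> w"
  shows "1 - exp (- w) \<le> w" and "\<bar>1 - exp (- w) - w\<bar> \<le> w\<^sup>2"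
proof -
  have lower: "1 - w \<le> exp (- w)" using exp_ge_add_one_self[of "- w"] by simp
  have "exp (- w) \<le> 1 / (1 + w)"
    using exp_ge_add_one_self[of w] assms by (simp add: exp_minus inverse_eq_divide frac_le)
  also have "\<dots> \<le> 1 - w + w\<^sup>2"
  proof -
    have "1 \<le> (1 - w + w\<^sup>2) * (1 + w)" using assms by (simp add: algebra_simps power2_eq_square power3_eq_cube)
    then show ?thesis using assms by (simp add: divide_le_eq)
  qed
  finally show "1 - exp (- w) \<le> w" "\<bar>1 - exp (- w) - w\<bar> \<le> w\<^sup>2"
    using lower by (simp_all add: abs_le_iff)
qed

lemma tendsto_of_bigo_powr:
  fixes f :: "nat \<Rightarrow> real"
  assumes "(\<lambda>N. f N - L) \<in> O(\<lambda>N. real N powr (- \<alpha>))" and "0 < \<alpha>"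
  shows "f \<longlonglongrightarrow> L"
proof -
  obtain c where "eventually (\<lambda>N. norm (f N - L) \<le> c * norm (real N powr (- \<alpha>))) sequentially"
    using landau_o.bigE[OF assms(1)] by blast
  moreover have "(\<lambda>N. c * norm (real N powr (- \<alpha>))) \<longlonglongrightarrow> 0"
    using assms(2)
    by (intro tendsto_mult_right_zero tendsto_norm_zero tendsto_neg_powr filterlim_real_sequentially) auto
  ultimately have "(\<lambda>N. f N - L) \<longlonglongrightarrow> 0" by (rule Lim_null_comparison)
  then show ?thesis by (simp add: LIM_zero_iff)
qed

lemma wN_le_of_low_capacity:
  assumes "0 < N" "0 < \<mu>" "\<mu> / 2 < muN lam N"
    and "0 < lam N i" "0 < lam N j" "lam N i \<le> c" "lam N j \<le> c"
  shows "wN lam N i j \<le> 2 / \<mu> * c\<^sup>2 / real N"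
proof -
  have "real N * \<mu> / 2 \<le> lN lam N"
    using assms(1,3) by (simp add: lN_def muN_def field_simps)
  moreover have "lam N i * lam N j \<le> c\<^sup>2"
    using assms(4-7) by (simp add: power2_eq_square mult_mono)
  ultimately have "wN lam N i j \<le> c\<^sup>2 / (real N * \<mu> / 2)"
    using assms(1,2,4,5) unfolding wN_def by (intro frac_le) auto
  then show ?thesis by (simp add: field_simps)
qed

lemma close_coupling_of_small_weights:
  assumes lam_pos: "\<And>i. i < N \<Longrightarrow> 0 < lam N i"
    and "0 < N" "0 < \<mu>" "\<mu> / 2 < muN lam N" "0 \<le> K"
    and h_near_id: "\<And>w. 0 < w \<Longrightarrow> w < \<delta> \<Longrightarrow> \<bar>h w - w\<bar> \<le> K * w\<^sup>2"
    and small: "2 / \<mu> * (real N powr \<xi>)\<^sup>2 / real N < min \<delta> (1 / 2)"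
  shows "close_coupling h lam \<xi> N ((1 + K) * (2 / \<mu>)\<^sup>2 * (real N powr \<xi>) ^ 4 / real N ^ 2)"
  unfolding close_coupling_def
proof (intro allI impI conjI)
  fix i j assume ij: "i < N" "j < N" "i \<noteq> j" "lam N i \<le> real N powr \<xi>" "lam N j \<le> real N powr \<xi>"
  let ?w = "wN lam N i j" and ?\<rho> = "2 / \<mu> * (real N powr \<xi>)\<^sup>2 / real N"
  have w_le: "?w \<le> ?\<rho>"
    using wN_le_of_low_capacity[of N \<mu> lam i j "real N powr \<xi>"] ij lam_pos assms(2-4) by simp
  have w_pos: "0 < ?w"
    using lam_pos ij by (auto simp: wN_def lN_def intro!: divide_pos_pos sum_pos)
  have "\<bar>pN lam N i j - pN' h lam N i j\<bar> \<le> \<bar>1 - exp (- ?w) - ?w\<bar> + \<bar>h ?w - ?w\<bar>"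
    by (simp add: pN_def pN'_def)
  also have "\<dots> \<le> (1 + K) * ?w\<^sup>2"
    using one_minus_exp_minus_bounds(2)[of ?w] h_near_id[of ?w] w_pos w_le small
    by (simp add: algebra_simps)
  also have "\<dots> \<le> (1 + K) * ?\<rho>\<^sup>2"
    using w_pos w_le \<open>0 \<le> K\<close> by (intro mult_left_mono power_mono) auto
  also have "\<dots> = (1 + K) * (2 / \<mu>)\<^sup>2 * (real N powr \<xi>) ^ 4 / real N ^ 2"
    by (simp add: power_mult_distrib power_divide flip: power_mult)
  finally show "\<bar>pN lam N i j - pN' h lam N i j\<bar>
      \<le> (1 + K) * (2 / \<mu>)\<^sup>2 * (real N powr \<xi>) ^ 4 / real N ^ 2" .
  show "pN lam N i j \<le> 1 / 2"
    using one_minus_exp_minus_bounds(1)[of ?w] w_pos w_le small by (simp add: pN_def)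
qed

lemma close_coupling_eventually:
  assumes lam_pos: "\<And>N i. i < N \<Longrightarrow> 0 < lam N i"
    and "0 < \<mu>" and mu_lim: "muN lam \<longlonglongrightarrow> \<mu>"
    and h_small: "(\<lambda>x. h x - x) \<in> O[at_right 0](\<lambda>x. x ^ 2)" and "\<xi> < 1 / 2"
  shows "\<exists>D\<ge>0. \<forall>\<^sub>F N in sequentially. close_coupling h lam \<xi> N (D * (real N powr \<xi>) ^ 4 / real N ^ 2)"
proof -
  obtain K where "0 < K" and "\<forall>\<^sub>F x in at_right 0. norm (h x - x) \<le> K * norm (x ^ 2)"
    using landau_o.bigE[OF h_small] by blast
  then obtain \<delta> where "0 < \<delta>" and h_near_id: "\<And>w. 0 < w \<Longrightarrow> w < \<delta> \<Longrightarrow> \<bar>h w - w\<bar> \<le> K * w\<^sup>2"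
    unfolding eventually_at_right_field by auto
  have "\<forall>\<^sub>F N in sequentially. 2 / \<mu> * real N powr (2 * \<xi> - 1) = 2 / \<mu> * (real N powr \<xi>)\<^sup>2 / real N"
    using eventually_gt_at_top[of 0]
  proof eventually_elim
    case (elim N)
    then have "(real N powr \<xi>)\<^sup>2 = real N powr (2 * \<xi>)" by (simp add: powr_power)
    then show ?case using powr_diff[of "real N" "2 * \<xi>" 1] by simp
  qed
  moreover have "(\<lambda>N. 2 / \<mu> * real N powr (2 * \<xi> - 1)) \<longlonglongrightarrow> 0"
    using \<open>\<xi> < 1 / 2\<close>
    by (intro tendsto_mult_right_zero tendsto_neg_powr filterlim_real_sequentially) auto
  ultimately have "(\<lambda>N. 2 / \<mu> * (real N powr \<xi>)\<^sup>2 / real N) \<longlonglongrightarrow> 0"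
    by (rule Lim_transform_eventually[rotated])
  then have "\<forall>\<^sub>F N in sequentially. 2 / \<mu> * (real N powr \<xi>)\<^sup>2 / real N < min \<delta> (1 / 2)"
    using \<open>0 < \<delta>\<close> by (intro order_tendstoD) auto
  moreover have "\<forall>\<^sub>F N in sequentially. \<mu> / 2 < muN lam N"
    using mu_lim \<open>0 < \<mu>\<close> by (intro order_tendstoD) auto
  ultimately have "\<forall>\<^sub>F N in sequentially.
      close_coupling h lam \<xi> N ((1 + K) * (2 / \<mu>)\<^sup>2 * (real N powr \<xi>) ^ 4 / real N ^ 2)"
    using eventually_gt_at_top[of 0]
    by eventually_elim (use lam_pos \<open>0 < \<mu>\<close> \<open>0 < K\<close> h_near_id in \<open>auto intro!: close_coupling_of_small_weights\<close>)
  moreover have "0 \<le> (1 + K) * (2 / \<mu>)\<^sup>2" using \<open>0 < K\<close> by simp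
  ultimately show ?thesis by blast
qed

theorem proposition2p3:
  fixes lam :: "nat \<Rightarrow> nat \<Rightarrow> real" and h :: "real \<Rightarrow> real" and \<xi> :: real
  assumes pos: "\<And>N i. i < N \<Longrightarrow> lam N i > 0"
    and C1: "\<exists>\<mu> \<nu> \<alpha>1. 0 < \<mu> \<and> 1 < \<nu> \<and> 0 < \<alpha>1 \<and>
              (\<lambda>N. muN lam N - \<mu>) \<in> O(\<lambda>N. real N powr (- \<alpha>1)) \<and>
              (\<lambda>N. nuN lam N - \<nu>) \<in> O(\<lambda>N. real N powr (- \<alpha>1))"
    and C2: "\<exists>f g :: nat \<Rightarrow> real. \<exists>\<alpha>2 > 0.
              (\<forall>\<^sub>F N in sequentially. summable (\<lambda>j. \<bar>fN lam N j - f j\<bar>)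
                                       \<and> summable (\<lambda>j. \<bar>gN lam N j - g j\<bar>)) \<and>
              (\<lambda>N. dTV (fN lam N) f) \<in> O(\<lambda>N. real N powr (- \<alpha>2)) \<and>
              (\<lambda>N. dTV (gN lam N) g) \<in> O(\<lambda>N. real N powr (- \<alpha>2))"
    and C3: "\<exists>\<tau> > 3. \<forall>\<epsilon> > 0. 1 / (\<tau> - 1) + \<epsilon> < 1/2 \<longrightarrow>
              limsup (\<lambda>N. ereal ((1 / real N) * (\<Sum>i<N. lam N i powr (\<tau> - 1 - \<epsilon>)))) < \<infinity> \<and>
              (\<forall>N \<ge> 1. \<forall>i < N. lam N i \<le> real N powr (1 / (\<tau> - 1) + \<epsilon>))"
    and h_range: "\<And>x. 0 \<le> x \<Longrightarrow> 0 \<le> h x \<and> h x \<le> 1"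
    and h_small: "(\<lambda>x. h x - x) \<in> O[at_right 0](\<lambda>x. x ^ 2)"
    and xi_pos: "\<xi> > 0"
  shows "\<exists>C. \<exists>N0. \<forall>N \<ge> N0. \<forall>(t::nat) (b::real). 0 < b \<and> b < 1 \<longrightarrow>
           prob_H_neq h lam N
             \<le> prob_notA h lam \<xi> N + prob_H_gt h lam N (2 * t)
                + 2 * real t * prob_ball_gt h lam N (t - 1) b
                + C * real t * real N powr (-1 + b) * (real N powr \<xi>) ^ 4"
proof -
  text \<open>For \<open>\<xi> \<ge> 1/2\<close> the error term alone exceeds \<open>1\<close> as soon as \<open>t \<ge> 1\<close>.\<close>
  have model: "capacity_model h lam N" for N by unfold_locales (use pos h_range in auto)
  obtain \<mu> \<alpha>1 where "0 < \<mu>" "0 < \<alpha>1"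
    and mu_rate: "(\<lambda>N. muN lam N - \<mu>) \<in> O(\<lambda>N. real N powr (- \<alpha>1))"
    using C1 by blast
  show ?thesis
  proof (cases "\<xi> < 1 / 2")
    case True
    obtain D where "0 \<le> D"
      and "\<forall>\<^sub>F N in sequentially. close_coupling h lam \<xi> N (D * (real N powr \<xi>) ^ 4 / real N ^ 2)"
      using close_coupling_eventually[OF pos \<open>0 < \<mu>\<close> tendsto_of_bigo_powr[OF mu_rate \<open>0 < \<alpha>1\<close>]
          h_small True]
      by blast
    then obtain N0 where "\<And>N. N0 \<le> N \<Longrightarrow> close_coupling h lam \<xi> N (D * (real N powr \<xi>) ^ 4 / real N ^ 2)"
      by (auto simp: eventually_sequentially)
    then show ?thesis
      using capacity_model.prob_H_neq_bound[OF model _ _ \<open>0 \<le> D\<close>]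
      by (intro exI[of _ "8 * D"] exI[of _ "max 2 N0"]) auto
  next
    case False
    then show ?thesis
      using prob_H_neq_bound_large_xi[of \<xi>] by (intro exI[of _ 1] exI[of _ 2]) auto
  qed
qed

end
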